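(* Let $t>0$ and $\gamma\ge 9$, and let $$r_2(\gamma)=\frac{\gamma-1-\sqrt{(\gamma-1)(\gamma-9)}}{4}.$$ Consider the infinite linear program: minimize $\phi$ over real $\phi$ and sequences $(x_i)_{i\ge1}$ with $x_i\ge0$ for all $i$, subject to $$\sum_{i=1}^{n}2x_i+(1-\gamma)x_{n-1}+nt\le\phi\qquad\text{for all } n\ge1,$$ with the convention $x_0=0$ (so the constraints read $2x_1+t\le\phi$, $(3-\gamma)x_1+2x_2+2t\le\phi$, $2x_1+(3-\gamma)x_2+2x_3+3t\le\phi$, etc.). Then the optimal value is $\phi(\gamma)=r_2(\gamma)\,t$, and it is attained by the strategy $$x_i=\tfrac12\big(r_2(\gamma)^i-1\big)t,\qquad i\ge1.$$ Equivalently, in the search-with-turn-cost model described in the context, this strategy has worst-case total cost $\gamma D+r_2(\gamma)t$, and no strategy guarantees worst-case total cost $\gamma D+\phi$ with $\phi<r_2(\gamma)t$.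
   Context: Model of searching on a line with turn cost and no lower bound on the target distance: the searcher alternates sides, at step $i$ walking distance $x_i\ge0$ from the origin on one side and back (the side alternating with $i$); the cost is the total distance walked plus $t$ for each excursion (turn). The target is at unknown distance $D>0$. A strategy guarantees total cost $\gamma D+\phi$ if for every target position the cost of finding it is at most $\gamma D+\phi$; the $n$-th linear constraint above expresses this for a target just beyond $x_{n-1}$ on the side visited at steps $n-1$ and $n+1$. *)

theory Defs
  imports Complex_Main
begin

definition r2 :: "real \<Rightarrow> real" where
  "r2 \<gamma> = (\<gamma> - 1 - sqrt ((\<gamma> - 1) * (\<gamma> - 9))) / 4"

text \<open>Feasibility for the infinite LP. The sequence is indexed from 1;
  the convention x_0 = 0 is built in (the value x 0 is ignored).\<close>
definition lp_feasible :: "real \<Rightarrow> real \<Rightarrow> real \<Rightarrow> (nat \<Rightarrow> real) \<Rightarrow> bool" where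
  "lp_feasible t \<gamma> \<phi> x \<longleftrightarrow>
     (\<forall>i\<ge>1. 0 \<le> x i) \<and>
     (\<forall>n\<ge>1. (\<Sum>i=1..n. 2 * x i) + (1 - \<gamma>) * (if n - 1 = 0 then 0 else x (n - 1))
               + real n * t \<le> \<phi>)"

end

theory Submission
  imports Defs
begin

(* Write S_n = x_1 + ... + x_n.  The n-th constraint reads
   2 S_n + (1 - gamma) x_{n-1} + n t <= phi, a linear recurrence whose characteristic
   equation 2 w^2 = (gamma - 1)(w - 1) has the roots r = r2 gamma and A = r / (r - 1),
   real for gamma >= 9, with 1 < r <= 2 <= A.

   Upper bound: the geometric strategy x_i = (r^i - 1) t / 2 makes every constraint
   tight at phi = r t.

   Lower bound (gamma > 9, so r < A): weighting the first N + 1 constraints by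
   A^k - r^k >= 0 makes the left-hand sides telescope to 2 (A - r) S_{N+1} >= 0, while
   the weighted right-hand sides have a closed form dominated by r (phi - r t) A^M.
   Hence phi < r t is impossible.  The double-root case gamma = 9 follows by a limit,
   because feasibility is monotone in gamma and r2 is continuous. *)

text \<open>Characteristic equation of the constraint recurrence \<open>2 S\<^sub>n - (\<gamma> - 1) x\<^sub>n\<^sub>-\<^sub>1 \<le> \<dots>\<close>
  (\<open>S\<^sub>n\<close> the partial sums): \<open>w\<close> is a root iff \<open>2 w\<^sup>2 - (\<gamma> - 1) w + (\<gamma> - 1) = 0\<close>.\<close>

definition char_root :: "real \<Rightarrow> real \<Rightarrow> bool" where
  "char_root \<gamma> w \<longleftrightarrow> 2 * w\<^sup>2 = (\<gamma> - 1) * (w - 1)"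

lemma r2_char_root:
  fixes \<gamma> :: real assumes "\<gamma> \<ge> 9"
  shows "char_root \<gamma> (r2 \<gamma>)"
proof -
  let ?s = "sqrt ((\<gamma> - 1) * (\<gamma> - 9))"
  have "?s = \<gamma> - 1 - 4 * r2 \<gamma>" unfolding r2_def by (simp add: field_simps)
  moreover have "?s\<^sup>2 = (\<gamma> - 1) * (\<gamma> - 9)" using assms by simp
  ultimately have "(\<gamma> - 1 - 4 * r2 \<gamma>)\<^sup>2 = (\<gamma> - 1) * (\<gamma> - 9)" by simp
  thus ?thesis unfolding char_root_def by (simp add: power2_eq_square algebra_simps)
qed

text \<open>The root \<open>r2 \<gamma>\<close> exceeds 1, and it is below 2 (the double root at \<open>\<gamma> = 9\<close>)
  as soon as \<open>\<gamma> > 9\<close>; this makes the two characteristic roots distinct.\<close>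

lemma r2_gt_1:
  fixes \<gamma> :: real assumes "\<gamma> \<ge> 9"
  shows "1 < r2 \<gamma>"
proof -
  have "sqrt ((\<gamma> - 1) * (\<gamma> - 9)) < sqrt ((\<gamma> - 5)\<^sup>2)"
    by (rule real_sqrt_less_mono) (simp add: power2_eq_square algebra_simps)
  thus ?thesis using assms unfolding r2_def by simp
qed

lemma r2_lt_2:
  fixes \<gamma> :: real assumes "\<gamma> > 9"
  shows "r2 \<gamma> < 2"
proof -
  have "\<gamma> - 9 < sqrt ((\<gamma> - 1) * (\<gamma> - 9))"
    using assms by (intro real_less_rsqrt) (simp add: power2_eq_square algebra_simps)
  thus ?thesis unfolding r2_def by simp
qed

text \<open>The roots come in pairs \<open>w\<close>, \<open>w / (w - 1)\<close>: their sum and product are both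
  \<open>(\<gamma> - 1) / 2\<close>.\<close>

lemma char_root_conjugate:
  assumes "char_root \<gamma> w" and "w \<noteq> 1"
  shows "char_root \<gamma> (w / (w - 1))"
proof -
  have d: "w - 1 \<noteq> 0" using assms(2) by simp
  have "2 * (w / (w - 1))\<^sup>2 = 2 * w\<^sup>2 / (w - 1)\<^sup>2" by (simp add: power_divide)
  also have "\<dots> = (\<gamma> - 1) / (w - 1)"
    using assms(1) d unfolding char_root_def by (simp add: power2_eq_square)
  also have "\<dots> = (\<gamma> - 1) * (w / (w - 1) - 1)" using d by (simp add: field_simps)
  finally show ?thesis unfolding char_root_def .
qed

definition lp_lhs :: "real \<Rightarrow> (nat \<Rightarrow> real) \<Rightarrow> nat \<Rightarrow> real" where
  "lp_lhs \<gamma> x n = (\<Sum>i=1..n. 2 * x i) + (1 - \<gamma>) * (if n - 1 = 0 then 0 else x (n - 1))"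

lemma lp_feasible_iff:
  "lp_feasible t \<gamma> \<phi> x \<longleftrightarrow> (\<forall>i\<ge>1. 0 \<le> x i) \<and> (\<forall>n\<ge>1. lp_lhs \<gamma> x n + real n * t \<le> \<phi>)"
  unfolding lp_feasible_def lp_lhs_def ..

lemma geometric_strategy_tight:
  assumes "char_root \<gamma> r" and "r \<noteq> 1" and "n \<ge> 1"
  shows "lp_lhs \<gamma> (\<lambda>i. (r ^ i - 1) * t / 2) n + real n * t = r * t"
proof -
  have geo: "(r - 1) * (\<Sum>i=1..n. r ^ i) = r ^ Suc n - r"
    using sum_gp_multiplied[OF assms(3), of r] by (simp add: algebra_simps)
  have sum: "(\<Sum>i=1..n. 2 * ((r ^ i - 1) * t / 2)) = t * (\<Sum>i=1..n. r ^ i) - real n * t"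
  proof -
    have "(\<Sum>i=1..n. 2 * ((r ^ i - 1) * t / 2)) = (\<Sum>i=1..n. t * r ^ i - t)"
      by (rule sum.cong) (simp_all add: field_simps)
    thus ?thesis by (simp add: sum_subtractf sum_distrib_left)
  qed
  show ?thesis
  proof (cases "n = 1")
    case True thus ?thesis by (simp add: lp_lhs_def field_simps)
  next
    case False
    then obtain m where m: "n = Suc (Suc m)" using assms(3) by (cases n; cases "n - 1") auto
    have "(r - 1) * (lp_lhs \<gamma> (\<lambda>i. (r ^ i - 1) * t / 2) n + real n * t)
        = t * ((r - 1) * (\<Sum>i=1..n. r ^ i)) - (\<gamma> - 1) * (r - 1) * ((r ^ Suc m - 1) * t / 2)"
      unfolding lp_lhs_def sum using m by (simp add: field_simps)
    also have "\<dots> = t * (r ^ Suc n - r) - 2 * r\<^sup>2 * ((r ^ Suc m - 1) * t / 2)"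
      using assms(1) unfolding geo char_root_def by simp
    also have "\<dots> = (r - 1) * (r * t)" unfolding m by (simp add: power2_eq_square field_simps)
    finally show ?thesis using assms(2) by simp
  qed
qed

lemma geometric_strategy_feasible:
  assumes "t > 0" and "\<gamma> \<ge> 9"
  shows "lp_feasible t \<gamma> (r2 \<gamma> * t) (\<lambda>i. (r2 \<gamma> ^ i - 1) * t / 2)"
  unfolding lp_feasible_iff
  using r2_gt_1[OF assms(2)] geometric_strategy_tight[OF r2_char_root[OF assms(2)]] assms(1)
  by (auto simp: one_le_power)

lemma lp_lhs_Suc_Suc:
  "lp_lhs \<gamma> x (Suc (Suc N)) = 2 * (\<Sum>i=1..N. x i) + (3 - \<gamma>) * x (Suc N) + 2 * x (Suc (Suc N))"
  by (simp add: lp_lhs_def sum_distrib_left algebra_simps)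

lemma weighted_lhs_sum:
  assumes root: "char_root \<gamma> w" and w1: "w \<noteq> 1"
  shows "(\<Sum>n=1..Suc N. w ^ (Suc (Suc N) - n) * lp_lhs \<gamma> x n)
       = 2 * w * x (Suc N) - 2 * w / (w - 1) * (\<Sum>i=1..N. x i)"
proof (induction N)
  case 0 show ?case by (simp add: lp_lhs_def)
next
  case (Suc N)
  let ?S = "\<Sum>i=1..N. x i"
  have shift: "(\<Sum>n=1..Suc N. w ^ (Suc (Suc (Suc N)) - n) * lp_lhs \<gamma> x n)
      = w * (\<Sum>n=1..Suc N. w ^ (Suc (Suc N) - n) * lp_lhs \<gamma> x n)"
    unfolding sum_distrib_left by (rule sum.cong) (auto simp: Suc_diff_le)
  have "(\<Sum>n=1..Suc (Suc N). w ^ (Suc (Suc (Suc N)) - n) * lp_lhs \<gamma> x n)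
      = (\<Sum>n=1..Suc N. w ^ (Suc (Suc (Suc N)) - n) * lp_lhs \<gamma> x n) + w * lp_lhs \<gamma> x (Suc (Suc N))"
    by simp
  also have "\<dots> = w * (2 * w * x (Suc N) - 2 * w / (w - 1) * ?S)
        + w * (2 * ?S + (3 - \<gamma>) * x (Suc N) + 2 * x (Suc (Suc N)))"
    unfolding shift Suc.IH lp_lhs_Suc_Suc ..
  also have "\<dots> = 2 * w * x (Suc (Suc N)) - 2 * w / (w - 1) * (?S + x (Suc N))
      + w * (2 * w\<^sup>2 - (\<gamma> - 1) * (w - 1)) / (w - 1) * x (Suc N)"
    using w1 by (simp add: divide_simps) (simp add: algebra_simps power2_eq_square)
  finally show ?case using root unfolding char_root_def by simp
qed

text \<open>Taking the difference for a conjugate pair \<open>r, A = r / (r - 1)\<close>, the two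
  coefficients swap and the result is a positive multiple of \<open>S\<^sub>N\<^sub>+\<^sub>1\<close> when \<open>A > r\<close>.\<close>

lemma conjugate_weighted_lhs_sum:
  assumes root: "char_root \<gamma> r" and r1: "r \<noteq> 1"
  defines "A \<equiv> r / (r - 1)"
  shows "(\<Sum>n=1..Suc N. (A ^ (Suc (Suc N) - n) - r ^ (Suc (Suc N) - n)) * lp_lhs \<gamma> x n)
       = 2 * (A - r) * (\<Sum>i=1..Suc N. x i)"
proof -
  have rootA: "char_root \<gamma> A" unfolding A_def by (rule char_root_conjugate[OF root r1])
  have A1: "A \<noteq> 1" using r1 unfolding A_def by (simp add: field_simps)
  have AA: "2 * A / (A - 1) = 2 * r" using r1 unfolding A_def by (simp add: field_simps)
  have rA: "2 * r / (r - 1) = 2 * A" unfolding A_def by simp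
  have "(\<Sum>n=1..Suc N. (A ^ (Suc (Suc N) - n) - r ^ (Suc (Suc N) - n)) * lp_lhs \<gamma> x n)
      = (2 * A * x (Suc N) - 2 * A / (A - 1) * (\<Sum>i=1..N. x i))
        - (2 * r * x (Suc N) - 2 * r / (r - 1) * (\<Sum>i=1..N. x i))"
    using weighted_lhs_sum[OF rootA A1, of N x]
      weighted_lhs_sum[OF root r1, of N x]
    by (simp add: left_diff_distrib sum_subtractf)
  also have "\<dots> = 2 * (A - r) * (\<Sum>i=1..Suc N. x i)"
    unfolding AA rA by (simp add: algebra_simps)
  finally show ?thesis .
qed

lemma weighted_budget_sum:
  fixes w \<phi> t :: real
  assumes w1: "w \<noteq> 1"
  defines "q \<equiv> w / (w - 1)"
  shows "(\<Sum>n=1..M. w ^ (Suc M - n) * (\<phi> - real n * t))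
       = q * (\<phi> - q * t) * (w ^ M - 1) + q * t * real M"
proof (induction M)
  case 0 show ?case by simp
next
  case (Suc M)
  have qw: "q * (w - 1) = w" using w1 unfolding q_def by simp
  have shift: "(\<Sum>n=1..M. w ^ (Suc (Suc M) - n) * (\<phi> - real n * t))
      = w * (\<Sum>n=1..M. w ^ (Suc M - n) * (\<phi> - real n * t))"
    unfolding sum_distrib_left by (rule sum.cong) (auto simp: Suc_diff_le)
  have "(\<Sum>n=1..Suc M. w ^ (Suc (Suc M) - n) * (\<phi> - real n * t))
      = (\<Sum>n=1..M. w ^ (Suc (Suc M) - n) * (\<phi> - real n * t)) + w * (\<phi> - real (Suc M) * t)"
    by simp
  also have "\<dots> = w * (q * (\<phi> - q * t) * (w ^ M - 1) + q * t * real M) + w * (\<phi> - real (Suc M) * t)"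
    unfolding shift Suc.IH ..
  also have "\<dots> = q * (\<phi> - q * t) * (w ^ Suc M - 1) + q * t * real (Suc M)
      + (q * (w - 1) - w) * (q * t - \<phi> + t * real (Suc M))"
    by (simp add: algebra_simps)
  finally show ?case unfolding qw by simp
qed

lemma eventually_dominant_power_negative:
  fixes a b c A r :: real
  assumes "1 < A" and "0 \<le> r" and "r < A" and "a < 0"
  shows "eventually (\<lambda>M. a * A ^ M + b * r ^ M + c < 0) sequentially"
proof -
  have "(\<lambda>M. a + b * (r / A) ^ M + c * (1 / A) ^ M) \<longlonglongrightarrow> a + b * 0 + c * 0"
    using assms by (intro tendsto_intros LIMSEQ_power_zero) auto
  hence "eventually (\<lambda>M. a + b * (r / A) ^ M + c * (1 / A) ^ M < 0) sequentially"
    using assms(4) by (intro order_tendstoD(2)) auto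
  thus ?thesis
  proof (rule eventually_mono)
    fix M :: nat
    assume neg: "a + b * (r / A) ^ M + c * (1 / A) ^ M < 0"
    have "a * A ^ M + b * r ^ M + c = A ^ M * (a + b * (r / A) ^ M + c * (1 / A) ^ M)"
      using assms(1) by (simp add: power_divide field_simps)
    thus "a * A ^ M + b * r ^ M + c < 0"
      using neg assms(1) by (simp add: mult_pos_neg)
  qed
qed

lemma feasible_conjugate_budget_nonneg:
  assumes root: "char_root \<gamma> r" and r1: "1 < r" and r2: "r \<le> 2"
    and F: "lp_feasible t \<gamma> \<phi> x"
  defines "A \<equiv> r / (r - 1)"
  shows "0 \<le> (\<Sum>n=1..Suc N. (A ^ (Suc (Suc N) - n) - r ^ (Suc (Suc N) - n)) * (\<phi> - real n * t))"
proof -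
  have rA: "r \<le> A" using r1 r2 unfolding A_def by (simp add: field_simps)
  have xpos: "\<And>i. 1 \<le> i \<Longrightarrow> 0 \<le> x i"
    and budget: "\<And>n. 1 \<le> n \<Longrightarrow> lp_lhs \<gamma> x n \<le> \<phi> - real n * t"
    using F unfolding lp_feasible_iff by (auto simp: algebra_simps)
  have "0 \<le> 2 * (A - r) * (\<Sum>i=1..Suc N. x i)"
    using rA xpos by (intro mult_nonneg_nonneg sum_nonneg) auto
  also have "\<dots> = (\<Sum>n=1..Suc N. (A ^ (Suc (Suc N) - n) - r ^ (Suc (Suc N) - n)) * lp_lhs \<gamma> x n)"
    using conjugate_weighted_lhs_sum[OF root] r1 unfolding A_def by simp
  also have "\<dots> \<le> (\<Sum>n=1..Suc N. (A ^ (Suc (Suc N) - n) - r ^ (Suc (Suc N) - n)) * (\<phi> - real n * t))"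
  proof (rule sum_mono)
    fix n assume n: "n \<in> {1..Suc N}"
    have "r ^ (Suc (Suc N) - n) \<le> A ^ (Suc (Suc N) - n)" using rA r1 by (intro power_mono) auto
    thus "(A ^ (Suc (Suc N) - n) - r ^ (Suc (Suc N) - n)) * lp_lhs \<gamma> x n
        \<le> (A ^ (Suc (Suc N) - n) - r ^ (Suc (Suc N) - n)) * (\<phi> - real n * t)"
      using budget n by (intro mult_left_mono) auto
  qed
  finally show ?thesis .
qed

text \<open>Lower bound for \<open>\<gamma> > 9\<close>: if \<open>\<phi> < r t\<close>, the weighted budget of the previous lemma
  behaves like \<open>r (\<phi> - r t) A\<^sup>M \<rightarrow> -\<infinity>\<close>, a contradiction.\<close>

lemma lower_bound_above_9:
  assumes t: "t > 0" and g: "\<gamma> > 9" and F: "lp_feasible t \<gamma> \<phi> x"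
  shows "r2 \<gamma> * t \<le> \<phi>"
proof (rule ccontr)
  assume "\<not> r2 \<gamma> * t \<le> \<phi>"
  define r where "r = r2 \<gamma>"
  define A where "A = r / (r - 1)"
  have lt: "\<phi> < r * t" using \<open>\<not> _\<close> unfolding r_def by simp
  have root: "char_root \<gamma> r" and r1: "1 < r" and r2: "r < 2"
    using r2_char_root r2_gt_1 r2_lt_2 g unfolding r_def by auto
  have rA: "r < A" and A1: "1 < A" using r1 r2 unfolding A_def by (simp_all add: field_simps)
  have Ar: "A / (A - 1) = r" using r1 unfolding A_def by (simp add: field_simps)
  have gap: "0 \<le> r * (\<phi> - r * t) * A ^ M - A * (\<phi> - A * t) * r ^ M
      + (A * (\<phi> - A * t) - r * (\<phi> - r * t))" if M: "M \<ge> 1" for M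
  proof -
    obtain N where N: "M = Suc N" using M by (cases M) auto
    have "0 \<le> (\<Sum>n=1..M. (A ^ (Suc M - n) - r ^ (Suc M - n)) * (\<phi> - real n * t))"
      using feasible_conjugate_budget_nonneg[OF root r1 _ F, of N] r2 unfolding N A_def by simp
    also have "\<dots> = (\<Sum>n=1..M. A ^ (Suc M - n) * (\<phi> - real n * t))
        - (\<Sum>n=1..M. r ^ (Suc M - n) * (\<phi> - real n * t))"
      by (simp add: left_diff_distrib sum_subtractf)
    also have "\<dots> = r * (\<phi> - r * t) * (A ^ M - 1) - A * (\<phi> - A * t) * (r ^ M - 1) + (r - A) * t * real M"
      using weighted_budget_sum[of A M \<phi> t] weighted_budget_sum[of r M \<phi> t] A1 r1
      unfolding Ar A_def[symmetric] by (simp add: algebra_simps)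
    also have "\<dots> \<le> r * (\<phi> - r * t) * A ^ M - A * (\<phi> - A * t) * r ^ M
        + (A * (\<phi> - A * t) - r * (\<phi> - r * t))"
      using rA t by (simp add: algebra_simps mult_right_mono)
    finally show ?thesis .
  qed
  have "eventually (\<lambda>M. r * (\<phi> - r * t) * A ^ M + (- A * (\<phi> - A * t)) * r ^ M
      + (A * (\<phi> - A * t) - r * (\<phi> - r * t)) < 0) sequentially"
    using A1 r1 rA lt by (intro eventually_dominant_power_negative) (auto simp: mult_pos_neg)
  moreover have "eventually (\<lambda>M. M \<ge> (1::nat)) sequentially" by (rule eventually_ge_at_top)
  ultimately have "eventually (\<lambda>M. False) sequentially"
    by eventually_elim (use gap in fastforce)
  thus False by simp
qed

text \<open>Raising \<open>\<gamma>\<close> only relaxes the constraints, since the \<open>\<gamma>\<close>-term has sign \<open>\<le> 0\<close>.\<close>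

lemma lp_feasible_mono_gamma:
  assumes F: "lp_feasible t \<gamma> \<phi> x" and le: "\<gamma> \<le> \<gamma>'"
  shows "lp_feasible t \<gamma>' \<phi> x"
proof -
  have xpos: "\<forall>i\<ge>1. 0 \<le> x i" and budget: "\<forall>n\<ge>1. lp_lhs \<gamma> x n + real n * t \<le> \<phi>"
    using F unfolding lp_feasible_iff by auto
  have "lp_lhs \<gamma>' x n \<le> lp_lhs \<gamma> x n" for n
    using xpos le unfolding lp_lhs_def by (auto intro!: mult_right_mono)
  thus ?thesis using xpos budget unfolding lp_feasible_iff by (meson add_right_mono order_trans)
qed

lemma lower_bound:
  assumes t: "t > 0" and g: "\<gamma> \<ge> 9" and F: "lp_feasible t \<gamma> \<phi> x"
  shows "r2 \<gamma> * t \<le> \<phi>"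
proof (cases "\<gamma> > 9")
  case True thus ?thesis using lower_bound_above_9[OF t _ F] by blast
next
  case False
  hence g9: "\<gamma> = 9" using g by simp
  have "eventually (\<lambda>\<gamma>'. r2 \<gamma>' * t \<le> \<phi>) (at_right 9)"
    using eventually_at_right_less[of "9::real"]
    by eventually_elim (use lower_bound_above_9[OF t _ lp_feasible_mono_gamma[OF F]] g9 in simp)
  moreover have "((\<lambda>\<gamma>'. r2 \<gamma>' * t) \<longlongrightarrow> r2 9 * t) (at_right 9)"
    unfolding r2_def by (intro tendsto_intros) simp
  ultimately have "r2 9 * t \<le> \<phi>"
    by (intro tendsto_le[OF trivial_limit_at_right_real tendsto_const])
  thus ?thesis using g9 by simp
qed

theorem theorem3:
  fixes t \<gamma> :: real
  assumes "t > 0" and "\<gamma> \<ge> 9"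
  shows "lp_feasible t \<gamma> (r2 \<gamma> * t) (\<lambda>i. (r2 \<gamma> ^ i - 1) * t / 2)
       \<and> (\<forall>\<phi> x. lp_feasible t \<gamma> \<phi> x \<longrightarrow> r2 \<gamma> * t \<le> \<phi>)"
  using geometric_strategy_feasible[OF assms] lower_bound[OF assms] by blast

end
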